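(* Let $\mathfrak{n}$ be a complex simple Lie algebra of type $C_n$ ($n\ge3$) and let $\mathfrak{n}=\mathfrak{n}_{-3}\oplus\cdots\oplus\mathfrak{n}_3$ be the $|3|$-grading associated to $\Sigma_i=\{\alpha_i,\alpha_n\}$, where $1\le i<n$. Then there is no graded isomorphism between $\mathfrak{F}_{r,3}$ and $\mathfrak{n}_{-3}\oplus\mathfrak{n}_{-2}\oplus\mathfrak{n}_{-1}$ (for any positive integer $r$).
   Context: Simple roots of $C_n$ are labeled in the standard way, with highest root $2\alpha_1+\cdots+2\alpha_{n-1}+\alpha_n$. For a root $\alpha=\sum a_l\alpha_l$ and a set $\Sigma$ of simple roots, $ht_\Sigma(\alpha)=\sum_{\alpha_l\in\Sigma}a_l$; the grading associated to $\Sigma$ is $\mathfrak{n}_m=\bigoplus_{ht_\Sigma(\alpha)=m}\mathfrak{g}_\alpha$ ($m\ne0$), $\mathfrak{n}_0=\mathfrak{h}\oplus\bigoplus_{ht_\Sigma(\alpha)=0}\mathfrak{g}_\alpha$, a $|3|$-grading since the highest root has $\Sigma_i$-height $3$. $\mathfrak{F}_{r,3}$ is the free nilpotent Lie algebra of step $3$ on $r$ generators with canonical grading $\mathfrak{f}_{-1}$ (span of generators), $\mathfrak{f}_{-2}=[\mathfrak{f}_{-1},\mathfrak{f}_{-1}]$, $\mathfrak{f}_{-3}=[\mathfrak{f}_{-1},\mathfrak{f}_{-2}]$; a graded isomorphism is a Lie algebra isomorphism mapping $\mathfrak{f}_{-m}$ onto $\mathfrak{n}_{-m}$ for $m=1,2,3$.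 *)

theory Defs
  imports Complex_Main "HOL-Library.Function_Algebras"
begin

text \<open>Vectors are functions into complex, with pointwise addition
 (Function_Algebras) and the following complex scalar multiplication.\<close>

definition csc :: "complex \<Rightarrow> ('a \<Rightarrow> complex) \<Rightarrow> ('a \<Rightarrow> complex)" where
  "csc c v = (\<lambda>x. c * v x)"

definition cspan :: "('a \<Rightarrow> complex) set \<Rightarrow> ('a \<Rightarrow> complex) set" where
  "cspan S = {v. \<exists>F coef. finite F \<and> F \<subseteq> S \<and> v = (\<Sum>u\<in>F. csc (coef u) u)}"

text \<open>2n x 2n complex matrices, as functions on index pairs, entries outside
 {0..<2n} x {0..<2n} being zero.\<close>

type_synonym cmat = "nat \<times> nat \<Rightarrow> complex"

definition mmul :: "nat \<Rightarrow> cmat \<Rightarrow> cmat \<Rightarrow> cmat" where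
  "mmul n A B = (\<lambda>(i,j). if i < 2*n \<and> j < 2*n then (\<Sum>k<2*n. A (i,k) * B (k,j)) else 0)"

definition mbr :: "nat \<Rightarrow> cmat \<Rightarrow> cmat \<Rightarrow> cmat" where
  "mbr n A B = mmul n A B - mmul n B A"

definition mtransp :: "cmat \<Rightarrow> cmat" where
  "mtransp A = (\<lambda>(i,j). A (j,i))"

definition Jmat :: "nat \<Rightarrow> cmat" where
  "Jmat n = (\<lambda>(i,j). if i < n \<and> j = i + n then 1
                      else if n \<le> i \<and> i < 2*n \<and> j = i - n then -1 else 0)"

definition sp :: "nat \<Rightarrow> cmat set" where
  "sp n = {X. (\<forall>i j. \<not> (i < 2*n \<and> j < 2*n) \<longrightarrow> X (i,j) = 0) \<and>
              mmul n (mtransp X) (Jmat n) + mmul n (Jmat n) X = 0}"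

text \<open>Cartan subalgebra: the diagonal matrices in sp(2n), i.e. diag(t_1..t_n,-t_1..-t_n).\<close>
definition cartan :: "nat \<Rightarrow> cmat set" where
  "cartan n = {H \<in> sp n. \<forall>i j. i \<noteq> j \<longrightarrow> H (i,j) = 0}"

text \<open>Simple roots (standard labelling, 1-indexed): alpha_l = e_l - e_(l+1) for l < n,
 alpha_n = 2 e_n, where e_l(H) = H(l-1,l-1). Highest root 2 e_1 = 2alpha_1+...+2alpha_(n-1)+alpha_n.\<close>
definition simple_root :: "nat \<Rightarrow> nat \<Rightarrow> cmat \<Rightarrow> complex" where
  "simple_root n l H = (if l < n then H (l-1, l-1) - H (l, l) else 2 * H (n-1, n-1))"

text \<open>A weight is given by its integer coefficients a_1..a_n w.r.t. the simple roots.\<close>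
definition weight_fun :: "nat \<Rightarrow> (nat \<Rightarrow> int) \<Rightarrow> cmat \<Rightarrow> complex" where
  "weight_fun n a H = (\<Sum>l\<in>{1..n}. of_int (a l) * simple_root n l H)"

definition root_space :: "nat \<Rightarrow> (nat \<Rightarrow> int) \<Rightarrow> cmat set" where
  "root_space n a = {X \<in> sp n. \<forall>H \<in> cartan n. mbr n H X = csc (weight_fun n a H) X}"

definition is_root :: "nat \<Rightarrow> (nat \<Rightarrow> int) \<Rightarrow> bool" where
  "is_root n a \<longleftrightarrow> (\<forall>l. l \<notin> {1..n} \<longrightarrow> a l = 0) \<and> (\<exists>l \<in> {1..n}. a l \<noteq> 0)
                   \<and> root_space n a \<noteq> {0}"

definition ht :: "nat set \<Rightarrow> (nat \<Rightarrow> int) \<Rightarrow> int" where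
  "ht \<Sigma> a = (\<Sum>l\<in>\<Sigma>. a l)"

text \<open>Graded component n_m for m \<noteq> 0 of the grading associated to \<Sigma>.\<close>
definition grade :: "nat \<Rightarrow> nat set \<Rightarrow> int \<Rightarrow> cmat set" where
  "grade n \<Sigma> m = cspan (\<Union> {root_space n a | a. is_root n a \<and> ht \<Sigma> a = m})"

definition neg_part :: "nat \<Rightarrow> nat set \<Rightarrow> cmat set" where
  "neg_part n \<Sigma> = cspan (grade n \<Sigma> (-1) \<union> grade n \<Sigma> (-2) \<union> grade n \<Sigma> (-3))"

text \<open>Realised as the Lie subalgebra generated by the letters inside the free associative
 algebra on r letters truncated above degree 3 (elements: coefficient functions on words).\<close>

type_synonym tens = "nat list \<Rightarrow> complex"

definition tmul :: "tens \<Rightarrow> tens \<Rightarrow> tens" where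
  "tmul p q = (\<lambda>w. if length w \<le> 3 then (\<Sum>k\<le>length w. p (take k w) * q (drop k w)) else 0)"

definition tbr :: "tens \<Rightarrow> tens \<Rightarrow> tens" where
  "tbr p q = tmul p q - tmul q p"

definition gen :: "nat \<Rightarrow> tens" where
  "gen a = (\<lambda>w. if w = [a] then 1 else 0)"

definition f1 :: "nat \<Rightarrow> tens set" where
  "f1 r = cspan {gen a | a. a < r}"

definition f2 :: "nat \<Rightarrow> tens set" where
  "f2 r = cspan {tbr (gen a) (gen b) | a b. a < r \<and> b < r}"

definition f3 :: "nat \<Rightarrow> tens set" where
  "f3 r = cspan {tbr (gen a) (tbr (gen b) (gen c)) | a b c. a < r \<and> b < r \<and> c < r}"

definition free_nil3 :: "nat \<Rightarrow> tens set" where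
  "free_nil3 r = cspan (f1 r \<union> f2 r \<union> f3 r)"

definition graded_iso :: "nat \<Rightarrow> nat set \<Rightarrow> nat \<Rightarrow> (tens \<Rightarrow> cmat) \<Rightarrow> bool" where
  "graded_iso n \<Sigma> r \<phi> \<longleftrightarrow>
     (\<forall>x\<in>free_nil3 r. \<forall>y\<in>free_nil3 r. \<phi> (x + y) = \<phi> x + \<phi> y) \<and>
     (\<forall>c. \<forall>x\<in>free_nil3 r. \<phi> (csc c x) = csc c (\<phi> x)) \<and>
     bij_betw \<phi> (free_nil3 r) (neg_part n \<Sigma>) \<and>
     (\<forall>x\<in>free_nil3 r. \<forall>y\<in>free_nil3 r. \<phi> (tbr x y) = mbr n (\<phi> x) (\<phi> y)) \<and>
     \<phi> ` f1 r = grade n \<Sigma> (-1) \<and>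
     \<phi> ` f2 r = grade n \<Sigma> (-2) \<and>
     \<phi> ` f3 r = grade n \<Sigma> (-3)"

end

theory Submission
  imports Defs
begin

text \<open>In the free nilpotent Lie algebra two elements of degree one commute only if they are
  proportional: the coefficient of the word ab in [x, y] is x_a y_b - y_a x_b. A graded isomorphism
  would carry this over to n_{-1}. But for \<open>\<Sigma> = {\<alpha>\<^sub>i, \<alpha>\<^sub>n}\<close> the space n_{-1} contains
  the root vector of e_n - e_1 together with that of e_{n-1} - e_1 (if i = 1) or of e_n - e_2
  (if i > 1). The sum of the two roots is not a root, so these root vectors commute, and they
  are linearly independent.\<close>

lemma sum_fun_apply: "(sum f A) x = (\<Sum>a\<in>A. f a x)"
  by (induction A rule: infinite_finite_induct) auto

lemma csc_apply [simp]: "csc c v x = c * v x"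
  by (simp add: csc_def)

lemma csc_zero_left [simp]: "csc 0 v = 0"
  by (simp add: fun_eq_iff)

lemma csc_diff: "csc c (v - w) = csc c v - csc c w"
  by (simp add: fun_eq_iff algebra_simps)

lemma csc_csc: "csc c (csc d v) = csc (c * d) v"
  by (simp add: fun_eq_iff)

lemma csc_sum: "csc c (sum f A) = (\<Sum>a\<in>A. csc c (f a))"
  by (simp add: fun_eq_iff sum_fun_apply sum_distrib_left)

lemma cspan_base: "v \<in> S \<Longrightarrow> v \<in> cspan S"
  unfolding cspan_def by (intro CollectI exI[of _ "{v}"] exI[of _ "\<lambda>_. 1"]) (auto simp: fun_eq_iff)

lemma cspan_zero: "0 \<in> cspan S"
  unfolding cspan_def by (intro CollectI exI[of _ "{}"]) auto

lemma sum_csc_extend: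
  assumes "finite G" "F \<subseteq> G"
  shows "(\<Sum>u\<in>F. csc (c u) u) = (\<Sum>u\<in>G. csc (if u \<in> F then c u else 0) u)"
  using assms by (intro sum.mono_neutral_cong_left) auto

lemma sum_csc_add:
  "(\<Sum>u\<in>A. csc (c u) u) + (\<Sum>u\<in>A. csc (d u) u) = (\<Sum>u\<in>A. csc (c u + d u) u)"
  by (simp add: fun_eq_iff sum_fun_apply distrib_right sum.distrib)

lemma cspan_add:
  assumes "v \<in> cspan S" "w \<in> cspan S"
  shows "v + w \<in> cspan S"
proof -
  obtain F c where F: "finite F" "F \<subseteq> S" "v = (\<Sum>u\<in>F. csc (c u) u)"
    using assms(1) unfolding cspan_def by auto
  obtain G d where G: "finite G" "G \<subseteq> S" "w = (\<Sum>u\<in>G. csc (d u) u)"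
    using assms(2) unfolding cspan_def by auto
  define c' where "c' u = (if u \<in> F then c u else 0)" for u
  define d' where "d' u = (if u \<in> G then d u else 0)" for u
  have "v = (\<Sum>u\<in>F \<union> G. csc (c' u) u)" "w = (\<Sum>u\<in>F \<union> G. csc (d' u) u)"
    unfolding F(3) G(3) c'_def d'_def using F(1) G(1) by (auto intro: sum_csc_extend)
  then have "v + w = (\<Sum>u\<in>F \<union> G. csc (c' u + d' u) u)"
    by (simp only: sum_csc_add)
  moreover have "finite (F \<union> G)" "F \<union> G \<subseteq> S"
    using F(1,2) G(1,2) by auto
  ultimately show ?thesis
    unfolding cspan_def by (intro CollectI exI conjI)
qed

lemma cspan_csc:
  assumes "v \<in> cspan S"
  shows "csc c v \<in> cspan S"
proof -
  obtain F d where F: "finite F" "F \<subseteq> S" "v = (\<Sum>u\<in>F. csc (d u) u)"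
    using assms unfolding cspan_def by auto
  have "csc c v = (\<Sum>u\<in>F. csc (c * d u) u)"
    unfolding F(3) csc_sum csc_csc ..
  with F(1,2) show ?thesis
    unfolding cspan_def by (intro CollectI exI conjI)
qed

lemma cspan_sum: "(\<And>a. a \<in> A \<Longrightarrow> f a \<in> cspan S) \<Longrightarrow> sum f A \<in> cspan S"
  by (induction A rule: infinite_finite_induct) (auto simp: cspan_zero cspan_add)

lemma f1_vanishes_off_letters:
  assumes "p \<in> f1 r" "\<not> (\<exists>a<r. w = [a])"
  shows "p w = 0"
proof -
  obtain F c where F: "F \<subseteq> {gen a | a. a < r}" "p = (\<Sum>u\<in>F. csc (c u) u)"
    using assms(1) unfolding f1_def cspan_def by auto
  have "p w = (\<Sum>u\<in>F. c u * u w)"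
    using F(2) by (simp add: sum_fun_apply)
  also have "\<dots> = 0"
    using F(1) assms(2) by (intro sum.neutral) (auto simp: gen_def)
  finally show ?thesis .
qed

lemma f1_eq_sum_gen:
  assumes "p \<in> f1 r"
  shows "p = (\<Sum>a<r. csc (p [a]) (gen a))"
proof
  fix w
  show "p w = (\<Sum>a<r. csc (p [a]) (gen a)) w"
  proof (cases "\<exists>a<r. w = [a]")
    case True
    then show ?thesis
      by (auto simp: sum_fun_apply gen_def if_distrib cong: if_cong)
  next
    case False
    then show ?thesis
      using f1_vanishes_off_letters[OF assms False] by (auto simp: sum_fun_apply gen_def)
  qed
qed

lemma tmul_sum_left: "tmul (sum f A) q = (\<Sum>a\<in>A. tmul (f a) q)"
proof
  fix w
  show "tmul (sum f A) q w = (\<Sum>a\<in>A. tmul (f a) q) w"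
    by (cases "length w \<le> 3") (simp_all add: tmul_def sum_fun_apply sum_distrib_right, rule sum.swap)
qed

lemma tmul_sum_right: "tmul p (sum f A) = (\<Sum>a\<in>A. tmul p (f a))"
proof
  fix w
  show "tmul p (sum f A) w = (\<Sum>a\<in>A. tmul p (f a)) w"
    by (cases "length w \<le> 3") (simp_all add: tmul_def sum_fun_apply sum_distrib_left, rule sum.swap)
qed

lemma tmul_csc_left: "tmul (csc c p) q = csc c (tmul p q)"
  by (simp add: tmul_def fun_eq_iff sum_distrib_left mult.assoc)

lemma tmul_csc_right: "tmul p (csc c q) = csc c (tmul p q)"
  by (simp add: tmul_def fun_eq_iff sum_distrib_left algebra_simps)

lemma tmul_sum_csc:
  "tmul (\<Sum>a\<in>A. csc (c a) (g a)) (\<Sum>b\<in>B. csc (d b) (h b))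
     = (\<Sum>a\<in>A. \<Sum>b\<in>B. csc (c a * d b) (tmul (g a) (h b)))"
  by (simp add: tmul_sum_left tmul_sum_right tmul_csc_left tmul_csc_right csc_sum csc_csc
      mult.commute sum.swap[of _ B])

lemma tbr_sum_csc:
  "tbr (\<Sum>a\<in>A. csc (c a) (g a)) (\<Sum>b\<in>B. csc (d b) (h b))
     = (\<Sum>a\<in>A. \<Sum>b\<in>B. csc (c a * d b) (tbr (g a) (h b)))"
proof -
  have "tmul (\<Sum>b\<in>B. csc (d b) (h b)) (\<Sum>a\<in>A. csc (c a) (g a))
      = (\<Sum>a\<in>A. \<Sum>b\<in>B. csc (c a * d b) (tmul (h b) (g a)))"
    unfolding tmul_sum_csc by (subst sum.swap) (simp add: mult.commute)
  then show ?thesis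
    unfolding tbr_def tmul_sum_csc by (simp add: sum_subtractf csc_diff)
qed

lemma tbr_f1_in_free_nil3:
  assumes "x \<in> f1 r" "y \<in> f1 r"
  shows "tbr x y \<in> free_nil3 r"
proof -
  have "tbr (gen a) (gen b) \<in> free_nil3 r" if "a < r" "b < r" for a b
    using that unfolding free_nil3_def f2_def by (blast intro: cspan_base)
  then have "(\<Sum>a<r. \<Sum>b<r. csc (x [a] * y [b]) (tbr (gen a) (gen b))) \<in> free_nil3 r"
    unfolding free_nil3_def by (intro cspan_sum cspan_csc) auto
  then show ?thesis
    by (subst f1_eq_sum_gen[OF assms(1)], subst f1_eq_sum_gen[OF assms(2)]) (simp only: tbr_sum_csc)
qed

lemma tmul_length2: "tmul p q [a, b] = p [] * q [a, b] + p [a] * q [b] + p [a, b] * q []"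
  by (simp add: tmul_def numeral_2_eq_2 atMost_Suc)

lemma f1_commuting_proportional:
  assumes x: "x \<in> f1 r" and y: "y \<in> f1 r" and "tbr x y = 0" and "x \<noteq> 0"
  shows "\<exists>c. y = csc c x"
proof -
  obtain w where "x w \<noteq> 0"
    using \<open>x \<noteq> 0\<close> by (auto simp: fun_eq_iff)
  then obtain a where a: "x [a] \<noteq> 0"
    using f1_vanishes_off_letters[OF x] by (metis (full_types))
  have minor: "x [a] * y [b] = y [a] * x [b]" for b
  proof -
    have "\<And>p v. p \<in> f1 r \<Longrightarrow> length v \<noteq> 1 \<Longrightarrow> p v = 0"
      by (rule f1_vanishes_off_letters) auto
    then have "tbr x y [a, b] = x [a] * y [b] - y [a] * x [b]"
      using x y by (simp add: tbr_def tmul_length2)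
    then show ?thesis
      using \<open>tbr x y = 0\<close> by simp
  qed
  define c where "c = y [a] / x [a]"
  have "y v = c * x v" for v
  proof (cases "\<exists>b<r. v = [b]")
    case True
    then obtain b where "v = [b]"
      by blast
    then show ?thesis
      using minor[of b] a by (simp add: c_def field_simps)
  next
    case False
    then show ?thesis
      using f1_vanishes_off_letters[OF x False] f1_vanishes_off_letters[OF y False] by simp
  qed
  then have "y = csc c x"
    by (simp add: fun_eq_iff)
  then show ?thesis ..
qed

lemma graded_iso_commuting_degree_one_proportional:
  assumes iso: "graded_iso n S r \<phi>"
    and X: "X \<in> grade n S (-1)" and Y: "Y \<in> grade n S (-1)"
    and "mbr n X Y = 0" and "X \<noteq> 0"
  shows "\<exists>c. Y = csc c X"
proof -
  have add: "\<And>x y. x \<in> free_nil3 r \<Longrightarrow> y \<in> free_nil3 r \<Longrightarrow> \<phi> (x + y) = \<phi> x + \<phi> y"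
    and scale: "\<And>c x. x \<in> free_nil3 r \<Longrightarrow> \<phi> (csc c x) = csc c (\<phi> x)"
    and inj: "inj_on \<phi> (free_nil3 r)"
    and hom: "\<And>x y. x \<in> free_nil3 r \<Longrightarrow> y \<in> free_nil3 r \<Longrightarrow> \<phi> (tbr x y) = mbr n (\<phi> x) (\<phi> y)"
    and deg1: "\<phi> ` f1 r = grade n S (-1)"
    using iso unfolding graded_iso_def by (auto intro: bij_betw_imp_inj_on)
  obtain x y where x: "x \<in> f1 r" "\<phi> x = X" and y: "y \<in> f1 r" "\<phi> y = Y"
    using X Y deg1 by (metis imageE)
  have f1_sub: "f1 r \<subseteq> free_nil3 r" and zero: "0 \<in> free_nil3 r"
    unfolding free_nil3_def by (auto intro: cspan_base cspan_zero)
  have x': "x \<in> free_nil3 r" and y': "y \<in> free_nil3 r"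
    using x y f1_sub by auto
  have "\<phi> 0 = 0"
    using add[OF zero zero] by simp
  moreover have "\<phi> (tbr x y) = 0"
    using hom[OF x' y'] x y \<open>mbr n X Y = 0\<close> by simp
  ultimately have "tbr x y = 0"
    using inj_onD[OF inj _ tbr_f1_in_free_nil3[OF x(1) y(1)] zero] by simp
  moreover have "x \<noteq> 0"
    using x \<open>X \<noteq> 0\<close> \<open>\<phi> 0 = 0\<close> by auto
  ultimately obtain c where "y = csc c x"
    using f1_commuting_proportional x(1) y(1) by blast
  then have "Y = csc c X"
    using x y scale[OF x'] by simp
  then show ?thesis ..
qed

definition mat_unit :: "nat \<Rightarrow> nat \<Rightarrow> cmat" where
  "mat_unit p q = (\<lambda>(i, j). if i = p \<and> j = q then 1 else 0)"

lemma mat_unit_apply [simp]: "mat_unit p q (i, j) = (if i = p \<and> j = q then 1 else 0)"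
  by (simp add: mat_unit_def)

lemma if_one_zero_mult: "(if c then 1 else 0) * x = (if c then x else (0::'a::semiring_1))"
  by simp

lemma mult_if_one_zero: "x * (if c then 1 else 0) = (if c then x else (0::'a::semiring_1))"
  by simp

lemma mmul_mat_unit_left:
  "mmul n (mat_unit p q) B = (\<lambda>(i, j). if i = p \<and> i < 2*n \<and> q < 2*n \<and> j < 2*n then B (q, j) else 0)"
  by (auto simp: fun_eq_iff mmul_def if_one_zero_mult sum.delta cong: if_cong)

lemma mmul_mat_unit_right:
  "mmul n A (mat_unit p q) = (\<lambda>(i, j). if j = q \<and> i < 2*n \<and> p < 2*n \<and> j < 2*n then A (i, p) else 0)"
  by (auto simp: fun_eq_iff mmul_def mult_if_one_zero sum.delta' cong: if_cong)

lemma mmul_mat_units: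
  "mmul n (mat_unit p q) (mat_unit q' s)
     = (if q = q' \<and> p < 2*n \<and> q < 2*n \<and> s < 2*n then mat_unit p s else 0)"
  by (auto simp: fun_eq_iff mmul_mat_unit_left)

lemma mmul_diff_left: "mmul n (A - B) C = mmul n A C - mmul n B C"
  by (auto simp: fun_eq_iff mmul_def algebra_simps sum_subtractf)

lemma mmul_diff_right: "mmul n C (A - B) = mmul n C A - mmul n C B"
  by (auto simp: fun_eq_iff mmul_def algebra_simps sum_subtractf)

lemma mbr_diff_right: "mbr n H (A - B) = mbr n H A - mbr n H B"
  by (simp add: mbr_def mmul_diff_left mmul_diff_right)

lemma mtransp_diff: "mtransp (A - B) = mtransp A - mtransp B"
  by (simp add: fun_eq_iff mtransp_def)

lemma mtransp_mat_unit: "mtransp (mat_unit p q) = mat_unit q p"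
  by (auto simp: fun_eq_iff mtransp_def)

lemma mat_unit_mmul_Jmat:
  assumes "p < 2*n" "q < n"
  shows "mmul n (mat_unit p q) (Jmat n) = mat_unit p (n + q)"
    and "mmul n (mat_unit p (n + q)) (Jmat n) = - mat_unit p q"
  using assms by (auto simp: fun_eq_iff mmul_mat_unit_left Jmat_def)

lemma Jmat_mmul_mat_unit:
  assumes "p < n" "q < 2*n"
  shows "mmul n (Jmat n) (mat_unit p q) = - mat_unit (n + p) q"
    and "mmul n (Jmat n) (mat_unit (n + p) q) = mat_unit p q"
  using assms by (auto simp: fun_eq_iff mmul_mat_unit_right Jmat_def)

lemma Jmat_row_upper: "k < n \<Longrightarrow> Jmat n (k, j) = (if j = n + k then 1 else 0)"
  by (auto simp: Jmat_def)

lemma Jmat_col_right: "k < n \<Longrightarrow> Jmat n (i, n + k) = (if i = k then 1 else 0)"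
  by (auto simp: Jmat_def)

lemma cartan_diag_symmetric:
  assumes "H \<in> cartan n" "k < n"
  shows "H (n + k, n + k) = - H (k, k)"
proof -
  have "H \<in> sp n"
    using assms(1) by (simp add: cartan_def)
  then have "(mmul n (mtransp H) (Jmat n) + mmul n (Jmat n) H) (k, n + k) = 0"
    by (simp add: sp_def)
  moreover have "mmul n (mtransp H) (Jmat n) (k, n + k) = H (k, k)"
    using assms(2) by (simp add: mmul_def mtransp_def Jmat_col_right mult_if_one_zero sum.delta' cong: if_cong)
  moreover have "mmul n (Jmat n) H (k, n + k) = H (n + k, n + k)"
    using assms(2) by (simp add: mmul_def Jmat_row_upper if_one_zero_mult sum.delta cong: if_cong)
  ultimately show ?thesis
    by (simp add: add_eq_0_iff)
qed

lemma mbr_cartan_mat_unit: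
  assumes "H \<in> cartan n" "p < 2*n" "q < 2*n"
  shows "mbr n H (mat_unit p q) = csc (H (p, p) - H (q, q)) (mat_unit p q)"
  using assms by (auto simp: fun_eq_iff mbr_def mmul_mat_unit_left mmul_mat_unit_right cartan_def)

text \<open>Indices are 0-based: for p < q < n, neg_root_vec n p q spans the root space of
  e_{q+1} - e_{p+1} = -(\<alpha>_{p+1} + ... + \<alpha>_q) in the 1-based labelling of simple_root,
  and neg_root_coeffs p q are the coefficients of this root.\<close>

definition neg_root_vec :: "nat \<Rightarrow> nat \<Rightarrow> nat \<Rightarrow> cmat" where
  "neg_root_vec n p q = mat_unit q p - mat_unit (n + p) (n + q)"

definition neg_root_coeffs :: "nat \<Rightarrow> nat \<Rightarrow> nat \<Rightarrow> int" where
  "neg_root_coeffs p q l = (if p < l \<and> l \<le> q then -1 else 0)"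

lemma neg_root_vec_in_sp:
  assumes "p < n" "q < n"
  shows "neg_root_vec n p q \<in> sp n"
  using assms
  by (auto simp: sp_def neg_root_vec_def mtransp_diff mtransp_mat_unit mmul_diff_left mmul_diff_right
      mat_unit_mmul_Jmat Jmat_mmul_mat_unit)

lemma neg_root_vec_apply_self [simp]: "q < n \<Longrightarrow> neg_root_vec n p q (q, p) = 1"
  by (simp add: neg_root_vec_def)

lemma neg_root_vec_nonzero: "q < n \<Longrightarrow> neg_root_vec n p q \<noteq> 0"
  by (metis neg_root_vec_apply_self zero_fun_apply zero_neq_one)

lemma neg_root_vec_not_proportional:
  assumes "q' < n" "(p', q') \<noteq> (p, q)"
  shows "neg_root_vec n p' q' \<noteq> csc c (neg_root_vec n p q)"
proof
  assume "neg_root_vec n p' q' = csc c (neg_root_vec n p q)"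
  then have "neg_root_vec n p' q' (q', p') = c * neg_root_vec n p q (q', p')"
    by simp
  then show False
    using assms by (auto simp: neg_root_vec_def)
qed

lemma mbr_neg_root_vec_same_fst:
  assumes "p \<noteq> q" "p \<noteq> q'" "q < n" "q' < n"
  shows "mbr n (neg_root_vec n p q) (neg_root_vec n p q') = 0"
  using assms by (simp add: mbr_def neg_root_vec_def mmul_diff_left mmul_diff_right mmul_mat_units)

lemma mbr_neg_root_vec_same_snd:
  assumes "p \<noteq> q" "p' \<noteq> q" "p < n" "p' < n"
  shows "mbr n (neg_root_vec n p q) (neg_root_vec n p' q) = 0"
  using assms by (simp add: mbr_def neg_root_vec_def mmul_diff_left mmul_diff_right mmul_mat_units)

lemma weight_fun_neg_root_coeffs:
  assumes "p \<le> q" "q < n"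
  shows "weight_fun n (neg_root_coeffs p q) H = H (q, q) - H (p, p)"
proof -
  have "weight_fun n (neg_root_coeffs p q) H
      = (\<Sum>l\<in>{1..n}. if l \<in> {Suc p..<Suc q} then H (l, l) - H (l - 1, l - 1) else 0)"
    unfolding weight_fun_def
    by (rule sum.cong) (use assms in \<open>auto simp: neg_root_coeffs_def simple_root_def\<close>)
  also have "\<dots> = (\<Sum>l\<in>{1..n} \<inter> {Suc p..<Suc q}. H (l, l) - H (l - 1, l - 1))"
    by (simp only: sum.inter_restrict finite_atLeastAtMost)
  also have "\<dots> = (\<Sum>l\<in>{Suc p..<Suc q}. H (l, l) - H (l - 1, l - 1))"
    using assms by (simp add: Int_absorb1 subset_iff)
  also have "\<dots> = (\<Sum>j\<in>{p..<q}. H (Suc j, Suc j) - H (j, j))"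
    by (simp only: sum.atLeast_Suc_lessThan_Suc_shift comp_def diff_Suc_1)
  also have "\<dots> = H (q, q) - H (p, p)"
    using assms(1) by (rule sum_Suc_diff')
  finally show ?thesis .
qed

lemma neg_root_vec_in_root_space:
  assumes "p \<le> q" "q < n"
  shows "neg_root_vec n p q \<in> root_space n (neg_root_coeffs p q)"
  unfolding root_space_def
proof (intro CollectI conjI ballI)
  show "neg_root_vec n p q \<in> sp n"
    using assms by (intro neg_root_vec_in_sp) auto
  fix H
  assume H: "H \<in> cartan n"
  then have "H (n + p, n + p) - H (n + q, n + q) = H (q, q) - H (p, p)"
    using assms by (simp add: cartan_diag_symmetric)
  then show "mbr n H (neg_root_vec n p q) = csc (weight_fun n (neg_root_coeffs p q) H) (neg_root_vec n p q)"
    using assms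
    by (simp add: neg_root_vec_def mbr_diff_right mbr_cartan_mat_unit[OF H] weight_fun_neg_root_coeffs csc_diff)
qed

lemma is_root_neg_root_coeffs:
  assumes "p < q" "q < n"
  shows "is_root n (neg_root_coeffs p q)"
  unfolding is_root_def
proof (intro conjI)
  show "\<forall>l. l \<notin> {1..n} \<longrightarrow> neg_root_coeffs p q l = 0"
    using assms by (auto simp: neg_root_coeffs_def)
  show "\<exists>l\<in>{1..n}. neg_root_coeffs p q l \<noteq> 0"
    using assms by (intro bexI[of _ q]) (auto simp: neg_root_coeffs_def)
  show "root_space n (neg_root_coeffs p q) \<noteq> {0}"
    using neg_root_vec_in_root_space[of p q n] neg_root_vec_nonzero[of q n p] assms by auto
qed

lemma root_space_subset_grade:
  assumes "is_root n a" "ht \<Sigma> a = m"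
  shows "root_space n a \<subseteq> grade n \<Sigma> m"
  using assms unfolding grade_def by (blast intro: cspan_base)

lemma neg_root_vec_in_grade:
  assumes "p < i" "i \<le> q" "q < n"
  shows "neg_root_vec n p q \<in> grade n {i, n} (-1)"
proof -
  have "ht {i, n} (neg_root_coeffs p q) = -1"
    using assms by (simp add: ht_def neg_root_coeffs_def)
  moreover have "is_root n (neg_root_coeffs p q)"
    using assms by (intro is_root_neg_root_coeffs) auto
  moreover have "neg_root_vec n p q \<in> root_space n (neg_root_coeffs p q)"
    using assms by (intro neg_root_vec_in_root_space) auto
  ultimately show ?thesis
    using root_space_subset_grade by blast
qed

theorem theorem4p7:
  fixes n i r :: nat
  assumes "n \<ge> 3" and "1 \<le> i" and "i < n" and "r > 0"
  shows "\<not> (\<exists>\<phi>. graded_iso n {i, n} r \<phi>)"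
proof
  assume "\<exists>\<phi>. graded_iso n {i, n} r \<phi>"
  then obtain \<phi> where iso: "graded_iso n {i, n} r \<phi>" ..
  define X where "X = neg_root_vec n 0 (n - 1)"
  have X: "X \<in> grade n {i, n} (-1)" "X \<noteq> 0"
    using assms unfolding X_def by (auto intro!: neg_root_vec_in_grade neg_root_vec_nonzero)
  obtain Y where Y: "Y \<in> grade n {i, n} (-1)" "mbr n X Y = 0" "\<And>c. Y \<noteq> csc c X"
  proof (cases "i = 1")
    case True
    have "neg_root_vec n 0 (n - 2) \<in> grade n {i, n} (-1)"
      "mbr n X (neg_root_vec n 0 (n - 2)) = 0"
      "\<And>c. neg_root_vec n 0 (n - 2) \<noteq> csc c X"
      using assms True unfolding X_def
      by (auto intro!: neg_root_vec_in_grade mbr_neg_root_vec_same_fst simp: neg_root_vec_not_proportional)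
    then show thesis
      by (rule that)
  next
    case False
    have "neg_root_vec n 1 (n - 1) \<in> grade n {i, n} (-1)"
      "mbr n X (neg_root_vec n 1 (n - 1)) = 0"
      "\<And>c. neg_root_vec n 1 (n - 1) \<noteq> csc c X"
      using assms False unfolding X_def
      by (auto intro!: neg_root_vec_in_grade mbr_neg_root_vec_same_snd simp: neg_root_vec_not_proportional)
    then show thesis
      by (rule that)
  qed
  show False
    using graded_iso_commuting_degree_one_proportional[OF iso X(1) Y(1,2) X(2)] Y(3) by blast
qed

end
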